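(* Let $\mathcal{S}$ be a periodic symbol sequence of period $n$. Suppose $I-M_{\mathcal{S}^{\overline0}}$ is nonsingular, $I-M_{\mathcal{S}}$ and $P_{\mathcal{S}}$ are singular, $\mu\ne0$, and $\varrho^{\mathsf T}B\ne0$. Then $P_{\mathcal{S}^{(i)}}$ is singular for all $i$.
   Context: $A_L,A_R$ are real $N\times N$ matrices ($N\ge2$) with $A_R=A_L+Ce_1^{\mathsf T}$ for some $C\in\mathbb{R}^N$; $B\in\mathbb{R}^N$, $\mu\in\mathbb{R}$; $\varrho^{\mathsf T}=e_1^{\mathsf T}\mathrm{adj}(I-A_L)$. A periodic sequence $\mathcal{S}:\mathbb{Z}\to\{L,R\}$ of period $n$ is identified with $\mathcal{S}_0\cdots\mathcal{S}_{n-1}$; $\mathcal{S}^{(i)}_j=\mathcal{S}_{i+j}$; $\mathcal{S}^{\overline0}$ differs from $\mathcal{S}$ exactly at indices $\equiv0\pmod n$. $M_{\mathcal{S}}=A_{\mathcal{S}_{n-1}}\cdots A_{\mathcal{S}_0}$ and $P_{\mathcal{S}}=I+A_{\mathcal{S}_{n-1}}+A_{\mathcal{S}_{n-1}}A_{\mathcal{S}_{n-2}}+\cdots+A_{\mathcal{S}_{n-1}}\cdots A_{\mathcal{S}_1}$. *)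

theory Defs
  imports "Jordan_Normal_Form.Determinant"
begin

datatype side = L | R

fun other :: "side \<Rightarrow> side" where
  "other L = R" | "other R = L"

definition Amat :: "'a mat \<Rightarrow> 'a mat \<Rightarrow> side \<Rightarrow> 'a mat" where
  "Amat AL AR s = (case s of L \<Rightarrow> AL | R \<Rightarrow> AR)"

fun prodseq :: "nat \<Rightarrow> real mat \<Rightarrow> real mat \<Rightarrow> (int \<Rightarrow> side) \<Rightarrow> nat \<Rightarrow> real mat" where
  "prodseq N AL AR S 0 = 1\<^sub>m N"
| "prodseq N AL AR S (Suc k) = Amat AL AR (S (int k)) * prodseq N AL AR S k"

definition Mmat :: "nat \<Rightarrow> real mat \<Rightarrow> real mat \<Rightarrow> (int \<Rightarrow> side) \<Rightarrow> nat \<Rightarrow> real mat" where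
  "Mmat N AL AR S n = prodseq N AL AR S n"

fun tailprod :: "nat \<Rightarrow> real mat \<Rightarrow> real mat \<Rightarrow> (int \<Rightarrow> side) \<Rightarrow> nat \<Rightarrow> nat \<Rightarrow> real mat" where
  "tailprod N AL AR S n 0 = 1\<^sub>m N"
| "tailprod N AL AR S n (Suc j) = tailprod N AL AR S n j * Amat AL AR (S (int n - 1 - int j))"

fun Psum :: "nat \<Rightarrow> real mat \<Rightarrow> real mat \<Rightarrow> (int \<Rightarrow> side) \<Rightarrow> nat \<Rightarrow> nat \<Rightarrow> real mat" where
  "Psum N AL AR S n 0 = 0\<^sub>m N N"
| "Psum N AL AR S n (Suc k) = Psum N AL AR S n k + tailprod N AL AR S n k"

text \<open>P_S = I + A_{S_{n-1}} + A_{S_{n-1}} A_{S_{n-2}} + ... + A_{S_{n-1}} ... A_{S_1}\<close>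
definition Pmat :: "nat \<Rightarrow> real mat \<Rightarrow> real mat \<Rightarrow> (int \<Rightarrow> side) \<Rightarrow> nat \<Rightarrow> real mat" where
  "Pmat N AL AR S n = Psum N AL AR S n n"

definition shift :: "(int \<Rightarrow> side) \<Rightarrow> int \<Rightarrow> (int \<Rightarrow> side)" where
  "shift S i = (\<lambda>j. S (i + j))"

definition flip0 :: "nat \<Rightarrow> (int \<Rightarrow> side) \<Rightarrow> (int \<Rightarrow> side)" where
  "flip0 n S = (\<lambda>j. if j mod int n = 0 then other (S j) else S j)"

end

theory Submission
  imports Defs
begin

(*
  Since A_R - A_L is supported on the first column, the matrices I - M_S and I - M_S' (S' being S
  flipped at the multiples of n) differ only in their first column, and telescoping shows the same
  for P_S (I - A_L) and I - M_S. For the singular matrix G = (I - M_S')^-1 P_S this forces every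
  left null vector of G to be a multiple of e_1, so the first row of G vanishes and
  (I - M_S) G = (I - M_S') G = P_S.
  The property "I - M_T is singular and P_T = (I - M_T) X for some X" passes from T to its shift
  by one: if M_T = Q A and P_T = P' + Q with A = A_(T_0), then the shift has M = A Q and
  P = I + A P', and (I - A Q) (A X + I) = I + A P'. Hence det P = det (I - M) * det X = 0 for
  every shift of S.
*)

definition agree_off_col0 :: "nat \<Rightarrow> 'a mat \<Rightarrow> 'a mat \<Rightarrow> bool" where
  "agree_off_col0 N X Y \<longleftrightarrow> (\<forall>i<N. \<forall>j<N. j \<noteq> 0 \<longrightarrow> X $$ (i, j) = Y $$ (i, j))"

lemma agree_off_col0_refl: "agree_off_col0 N X X"
  by (simp add: agree_off_col0_def)

lemma agree_off_col0_sym: "agree_off_col0 N X Y \<Longrightarrow> agree_off_col0 N Y X"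
  by (simp add: agree_off_col0_def)

lemma agree_off_col0_trans:
  "agree_off_col0 N X Y \<Longrightarrow> agree_off_col0 N Y Z \<Longrightarrow> agree_off_col0 N X Z"
  by (simp add: agree_off_col0_def)

lemma agree_off_col0_add:
  assumes "X \<in> carrier_mat N N" "Y \<in> carrier_mat N N" "X' \<in> carrier_mat N N" "Y' \<in> carrier_mat N N"
    and "agree_off_col0 N X Y" "agree_off_col0 N X' Y'"
  shows "agree_off_col0 N (X + X') ((Y :: 'a :: plus mat) + Y')"
  using assms unfolding agree_off_col0_def by auto

lemma agree_off_col0_one_minus:
  assumes "X \<in> carrier_mat N N" "Y \<in> carrier_mat N N" "agree_off_col0 N X Y"
  shows "agree_off_col0 N (1\<^sub>m N - X) (1\<^sub>m N - (Y :: 'a :: ring_1 mat))"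
  using assms unfolding agree_off_col0_def by auto

lemma agree_off_col0_mult_left:
  assumes "Q \<in> carrier_mat N N" "X \<in> carrier_mat N N" "Y \<in> carrier_mat N N"
    and "agree_off_col0 N X Y"
  shows "agree_off_col0 N (Q * X) (Q * (Y :: 'a :: semiring_0 mat))"
  unfolding agree_off_col0_def
proof (intro allI impI)
  fix i j assume ij: "i < N" "j < N" "j \<noteq> 0"
  have "col X j = col Y j"
    using assms ij unfolding agree_off_col0_def by (intro eq_vecI) auto
  then show "(Q * X) $$ (i, j) = (Q * Y) $$ (i, j)"
    using assms ij by simp
qed

lemma agree_off_col0_mult_right:
  assumes "K \<in> carrier_mat N N" "K' \<in> carrier_mat N N" "G \<in> carrier_mat N N"
    and "agree_off_col0 N K K'" and "row G 0 = 0\<^sub>v N"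
  shows "K * G = K' * (G :: 'a :: semiring_0 mat)"
proof (rule eq_matI)
  fix i j assume "i < dim_row (K' * G)" "j < dim_col (K' * G)"
  then have ij: "i < N" "j < N" using assms by auto
  have G0: "G $$ (0, j) = 0"
    using arg_cong[OF assms(5), of "\<lambda>v. v $ j"] assms(3) ij by simp
  have "K $$ (i, k) * G $$ (k, j) = K' $$ (i, k) * G $$ (k, j)" if "k < N" for k
    using G0 assms(4) ij that unfolding agree_off_col0_def by (cases "k = 0") auto
  then have "(\<Sum>k<N. K $$ (i, k) * G $$ (k, j)) = (\<Sum>k<N. K' $$ (i, k) * G $$ (k, j))"
    by simp
  then show "(K * G) $$ (i, j) = (K' * G) $$ (i, j)"
    using assms ij by (simp add: scalar_prod_def lessThan_atLeast0)
qed (use assms in auto)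

lemma singular_imp_left_null_vector:
  fixes G :: "'a :: idom mat"
  assumes "G \<in> carrier_mat N N" "det G = 0"
  obtains z where "z \<in> carrier_vec N" "z \<noteq> 0\<^sub>v N" "transpose_mat G *\<^sub>v z = 0\<^sub>v N"
proof -
  have "det (transpose_mat G) = 0"
    using assms by (simp add: det_transpose)
  then show ?thesis
    using that det_0_iff_vec_prod_zero[of "transpose_mat G" N] assms(1) by auto
qed

lemma row0_zero_if_singular_agree_one:
  fixes G X :: "'a :: idom mat"
  assumes G: "G \<in> carrier_mat N N" and X: "X \<in> carrier_mat N N" and "0 < N"
    and "det G = 0" and agree: "agree_off_col0 N (G * X) (1\<^sub>m N)"
  shows "row G 0 = 0\<^sub>v N"
proof -
  obtain z where z: "z \<in> carrier_vec N" "z \<noteq> 0\<^sub>v N" "transpose_mat G *\<^sub>v z = 0\<^sub>v N"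
    using singular_imp_left_null_vector[OF G \<open>det G = 0\<close>] .
  have "transpose_mat (G * X) *\<^sub>v z = transpose_mat X *\<^sub>v (transpose_mat G *\<^sub>v z)"
    using G X z by (simp add: transpose_mult[OF G X])
  also have "\<dots> = 0\<^sub>v N"
    using X z by (intro eq_vecI) auto
  finally have GXz: "transpose_mat (G * X) *\<^sub>v z = 0\<^sub>v N" .
  have z_off0: "z $ j = 0" if j: "j < N" "j \<noteq> 0" for j
  proof -
    have "col (G * X) j = unit_vec N j"
      using agree j G X unfolding agree_off_col0_def by (intro eq_vecI) auto
    then have "(transpose_mat (G * X) *\<^sub>v z) $ j = z $ j"
      using j G X z by simp
    then show ?thesis
      using GXz j by simp
  qed
  then have z_unit: "z = z $ 0 \<cdot>\<^sub>v unit_vec N 0"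
    using z \<open>0 < N\<close> by (intro eq_vecI) (auto simp: unit_vec_def)
  with z have "z $ 0 \<noteq> 0"
    by auto
  moreover have "z $ 0 * G $$ (0, j) = 0" if "j < N" for j
  proof -
    have "z $ 0 * G $$ (0, j) = col G j \<bullet> z"
      using G that \<open>0 < N\<close> by (subst z_unit) simp
    also have "\<dots> = 0"
      using arg_cong[OF z(3), of "\<lambda>v. v $ j"] G that by simp
    finally show ?thesis .
  qed
  ultimately show ?thesis
    using G \<open>0 < N\<close> by (intro eq_vecI) auto
qed

lemma solvable_if_agree_off_col0_invertible:
  fixes K K' P X :: "'a :: field mat"
  assumes K: "K \<in> carrier_mat N N" and K': "K' \<in> carrier_mat N N"
    and P: "P \<in> carrier_mat N N" and X: "X \<in> carrier_mat N N" and "0 < N"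
    and agree_K: "agree_off_col0 N K K'" and "det K' \<noteq> 0" and "det P = 0"
    and agree_PX: "agree_off_col0 N (P * X) K"
  obtains G where "G \<in> carrier_mat N N" "K * G = P"
proof -
  obtain J where J: "J \<in> carrier_mat N N" "J * K' = 1\<^sub>m N" "K' * J = 1\<^sub>m N"
    using det_non_zero_imp_unit[OF K' \<open>det K' \<noteq> 0\<close>, of "()"]
    unfolding Units_def ring_mat_def by auto
  define G where "G = J * P"
  have G: "G \<in> carrier_mat N N"
    using J P by (simp add: G_def)
  have "det G = 0"
    using J P \<open>det P = 0\<close> by (simp add: G_def det_mult)
  moreover have "agree_off_col0 N (G * X) (1\<^sub>m N)"
  proof -
    have "agree_off_col0 N (J * (P * X)) (J * K')"
      using J P X K K' agree_PX agree_K
      by (intro agree_off_col0_mult_left) (auto intro: agree_off_col0_trans)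
    then show ?thesis
      using J P X by (simp add: G_def)
  qed
  ultimately have "row G 0 = 0\<^sub>v N"
    using row0_zero_if_singular_agree_one[OF G X \<open>0 < N\<close>] by blast
  then have "K * G = K' * G"
    by (rule agree_off_col0_mult_right[OF K K' G agree_K])
  also have "\<dots> = P"
    using J P K' by (simp add: G_def assoc_mult_mat[OF K' J(1) P, symmetric])
  finally show ?thesis
    using that G by blast
qed

lemma one_minus_mult_intertwine:
  fixes Q A :: "'a :: ring_1 mat"
  assumes "Q \<in> carrier_mat N N" "A \<in> carrier_mat N N"
  shows "(1\<^sub>m N - A * Q) * A = A * (1\<^sub>m N - Q * A)"
proof -
  have "(1\<^sub>m N - A * Q) * A = A - A * Q * A"
    using assms by (simp add: minus_mult_distrib_mat[of _ N N])
  also have "\<dots> = A * (1\<^sub>m N - Q * A)"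
    using assms
    by (simp add: mult_minus_distrib_mat[OF assms(2) one_carrier_mat mult_carrier_mat[OF assms]])
  finally show ?thesis .
qed

lemma singular_one_minus_mult_commute:
  fixes Q A :: "'a :: idom mat"
  assumes Q: "Q \<in> carrier_mat N N" and A: "A \<in> carrier_mat N N"
    and "det (1\<^sub>m N - Q * A) = 0"
  shows "det (1\<^sub>m N - A * Q) = 0"
proof -
  have "1\<^sub>m N - Q * A \<in> carrier_mat N N" "1\<^sub>m N - A * Q \<in> carrier_mat N N"
    using Q A by auto
  note kernel_iff = det_0_iff_vec_prod_zero[OF this(1)] det_0_iff_vec_prod_zero[OF this(2)]
  obtain v where v: "v \<in> carrier_vec N" "v \<noteq> 0\<^sub>v N" "(1\<^sub>m N - Q * A) *\<^sub>v v = 0\<^sub>v N"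
    using kernel_iff(1) assms(3) by auto
  have "(1\<^sub>m N - A * Q) *\<^sub>v (A *\<^sub>v v) = (A * (1\<^sub>m N - Q * A)) *\<^sub>v v"
    using v Q A by (simp add: one_minus_mult_intertwine[OF Q A, symmetric]
        assoc_mult_mat_vec[OF minus_carrier_mat[OF mult_carrier_mat[OF A Q]] A v(1)])
  also have "\<dots> = A *\<^sub>v 0\<^sub>v N"
    using v Q A
    by (simp add: assoc_mult_mat_vec[OF A minus_carrier_mat[OF mult_carrier_mat[OF Q A]] v(1)])
  also have "\<dots> = 0\<^sub>v N"
    using A by auto
  finally have Av_kernel: "(1\<^sub>m N - A * Q) *\<^sub>v (A *\<^sub>v v) = 0\<^sub>v N" .
  have "v - (Q * A) *\<^sub>v v = 0\<^sub>v N"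
    using v Q A by (simp add: minus_mult_distrib_mat_vec[of _ N N])
  then have "Q *\<^sub>v (A *\<^sub>v v) = v"
    using v Q A by (intro eq_vecI) (auto simp: vec_eq_iff)
  moreover have "Q *\<^sub>v 0\<^sub>v N = 0\<^sub>v N"
    using Q by auto
  ultimately have "A *\<^sub>v v \<noteq> 0\<^sub>v N"
    using v(2) by metis
  moreover have "A *\<^sub>v v \<in> carrier_vec N"
    using A v(1) by simp
  ultimately show ?thesis
    using kernel_iff(2) Av_kernel by blast
qed

lemma solution_one_minus_mult_commute:
  fixes Q A X Ps :: "'a :: ring_1 mat"
  assumes Q: "Q \<in> carrier_mat N N" and A: "A \<in> carrier_mat N N"
    and X: "X \<in> carrier_mat N N" and Ps: "Ps \<in> carrier_mat N N"
    and sol: "(1\<^sub>m N - Q * A) * X = Ps + Q"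
  shows "(1\<^sub>m N - A * Q) * (A * X + 1\<^sub>m N) = 1\<^sub>m N + A * Ps"
proof -
  have "(1\<^sub>m N - A * Q) * (A * X) = ((1\<^sub>m N - A * Q) * A) * X"
    by (rule assoc_mult_mat[symmetric, of _ N N _ N _ N]) (use Q A X in auto)
  also have "\<dots> = A * ((1\<^sub>m N - Q * A) * X)"
    using Q A X
    by (simp add: one_minus_mult_intertwine
        assoc_mult_mat[OF A minus_carrier_mat[OF mult_carrier_mat[OF Q A]] X])
  also have "\<dots> = A * Ps + A * Q"
    using Q A Ps by (simp add: sol mult_add_distrib_mat[of _ N N])
  finally have "(1\<^sub>m N - A * Q) * (A * X + 1\<^sub>m N) = (A * Ps + A * Q) + (1\<^sub>m N - A * Q)"
    using Q A X by (simp add: mult_add_distrib_mat[OF minus_carrier_mat[OF mult_carrier_mat[OF A Q]]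
        mult_carrier_mat[OF A X] one_carrier_mat])
  also have "\<dots> = 1\<^sub>m N + A * Ps"
    using Q A Ps by (intro eq_matI) auto
  finally show ?thesis .
qed

definition singular_left_factor :: "nat \<Rightarrow> 'a :: comm_ring_1 mat \<Rightarrow> 'a mat \<Rightarrow> bool" where
  "singular_left_factor N K P \<longleftrightarrow> det K = 0 \<and> (\<exists>X \<in> carrier_mat N N. K * X = P)"

lemma singular_left_factor_det_zero:
  assumes "K \<in> carrier_mat N N" and "singular_left_factor N K P"
  shows "det P = 0"
  using assms det_mult[OF assms(1)] unfolding singular_left_factor_def by fastforce

lemma periodic_add_mult:
  assumes "\<forall>j. S (j + int n) = S j"
  shows "S (j + int n * q) = S j"
proof (induction q rule: int_induct[where k = 0])
  case (step1 i)
  then show ?case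
    using assms[rule_format, of "j + int n * i"] by (simp add: algebra_simps)
next
  case (step2 i)
  then show ?case
    using assms[rule_format, of "j + int n * (i - 1)"] by (simp add: algebra_simps)
qed simp

lemma shift_shift: "shift (shift S a) b = shift S (a + b)"
  by (simp add: shift_def add.assoc)

lemma shift_mod_period:
  assumes "\<forall>j. S (j + int n) = S j"
  shows "shift S i = shift S (i mod int n)"
proof
  fix j
  have "i + j = (i mod int n + j) + int n * (i div int n)"
    by (simp add: algebra_simps)
  then show "shift S i j = shift S (i mod int n) j"
    unfolding shift_def using periodic_add_mult[OF assms] by metis
qed

lemma Amat_agree_off_col0:
  "agree_off_col0 N AL AR \<Longrightarrow> agree_off_col0 N AL (Amat AL AR s)"
  by (cases s) (simp_all add: Amat_def agree_off_col0_refl)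

lemma tailprod_shift1: "tailprod N AL AR (shift T 1) n j = tailprod N AL AR T (Suc n) j"
  by (induction j) (auto simp: shift_def algebra_simps)

lemma Psum_shift1: "Psum N AL AR (shift T 1) n j = Psum N AL AR T (Suc n) j"
  by (induction j) (auto simp: tailprod_shift1)

lemma tailprod_flip0:
  "tailprod N AL AR (flip0 (Suc m) S) (Suc m) m = tailprod N AL AR S (Suc m) m"
proof -
  have "flip0 (Suc m) S (int m - int i) = S (int m - int i)" if "i < m" for i
    using that by (simp add: flip0_def)
  then have "tailprod N AL AR (flip0 (Suc m) S) (Suc m) j = tailprod N AL AR S (Suc m) j"
    if "j \<le> m" for j
    using that by (induction j) auto
  then show ?thesis
    by simp
qed

context
  fixes N :: nat and AL AR :: "real mat"
  assumes AL: "AL \<in> carrier_mat N N" and AR: "AR \<in> carrier_mat N N"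
begin

lemma Amat_carrier[simp]: "Amat AL AR s \<in> carrier_mat N N"
  using AL AR by (cases s) (auto simp: Amat_def)

lemma tailprod_carrier[simp]: "tailprod N AL AR T n j \<in> carrier_mat N N"
  by (induction j) auto

lemma Psum_carrier[simp]: "Psum N AL AR T n k \<in> carrier_mat N N"
  by (induction k) auto

lemma Pmat_carrier[simp]: "Pmat N AL AR T n \<in> carrier_mat N N"
  by (simp add: Pmat_def)

lemma tailprod_Suc_left:
  "tailprod N AL AR T (Suc m) (Suc j) = Amat AL AR (T (int m)) * tailprod N AL AR T m j"
proof (induction j)
  case (Suc j)
  have "int (Suc m) - 1 - int (Suc j) = int m - 1 - int j"
    by simp
  then have "tailprod N AL AR T (Suc m) (Suc (Suc j))
      = Amat AL AR (T (int m)) * tailprod N AL AR T m j * Amat AL AR (T (int m - 1 - int j))"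
    by (simp only: tailprod.simps(2)[of _ _ _ _ _ "Suc j"] Suc)
  also have "\<dots> = Amat AL AR (T (int m)) * tailprod N AL AR T m (Suc j)"
    by (simp add: assoc_mult_mat[of _ N N _ N _ N])
  finally show ?case .
qed (simp add: left_mult_one_mat[OF Amat_carrier] right_mult_one_mat[OF Amat_carrier])

lemma Mmat_eq_tailprod: "Mmat N AL AR T n = tailprod N AL AR T n n"
proof -
  have "prodseq N AL AR T k = tailprod N AL AR T k k" for k
    by (induction k) (simp_all only: prodseq.simps tailprod_Suc_left tailprod.simps(1))
  then show ?thesis
    by (simp add: Mmat_def)
qed

lemma Mmat_carrier[simp]: "Mmat N AL AR T n \<in> carrier_mat N N"
  by (simp add: Mmat_eq_tailprod)

lemma Psum_Suc_left:
  "Psum N AL AR T (Suc m) (Suc k) = 1\<^sub>m N + Amat AL AR (T (int m)) * Psum N AL AR T m k"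
proof (induction k)
  case (Suc k)
  have "Psum N AL AR T (Suc m) (Suc (Suc k))
      = 1\<^sub>m N + Amat AL AR (T (int m)) * Psum N AL AR T m k
        + Amat AL AR (T (int m)) * tailprod N AL AR T m k"
    by (simp only: Psum.simps(2)[of _ _ _ _ _ "Suc k"] Suc tailprod_Suc_left)
  also have "\<dots> = 1\<^sub>m N + Amat AL AR (T (int m)) * Psum N AL AR T m (Suc k)"
    by (simp add: mult_add_distrib_mat[OF Amat_carrier Psum_carrier tailprod_carrier]
        assoc_add_mat[OF one_carrier_mat mult_carrier_mat[OF Amat_carrier Psum_carrier]
          mult_carrier_mat[OF Amat_carrier tailprod_carrier]])
  finally show ?case .
qed (simp add: right_mult_zero_mat[OF Amat_carrier])

lemma Mmat_Suc_split_first: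
  "Mmat N AL AR T (Suc m) = tailprod N AL AR T (Suc m) m * Amat AL AR (T 0)"
proof -
  have "int (Suc m) - 1 - int m = 0"
    by simp
  then show ?thesis
    by (simp only: Mmat_eq_tailprod tailprod.simps(2))
qed

lemma Mmat_shift1:
  "Mmat N AL AR (shift T 1) (Suc m) = Amat AL AR (T (int (Suc m))) * tailprod N AL AR T (Suc m) m"
  by (simp only: Mmat_eq_tailprod tailprod_shift1 tailprod_Suc_left)

lemma Pmat_shift1:
  "Pmat N AL AR (shift T 1) (Suc m) = 1\<^sub>m N + Amat AL AR (T (int (Suc m))) * Psum N AL AR T (Suc m) m"
  by (simp only: Pmat_def Psum_shift1 Psum_Suc_left)

lemma Psum_mult_one_minus_AL:
  assumes agree_LR: "agree_off_col0 N AL AR"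
  shows "agree_off_col0 N (Psum N AL AR T n k * (1\<^sub>m N - AL)) (1\<^sub>m N - tailprod N AL AR T n k)"
proof (induction k)
  case 0
  then show ?case
    using AL by (simp add: agree_off_col0_def)
next
  case (Suc k)
  let ?P = "Psum N AL AR T n k" and ?t = "tailprod N AL AR T n k"
    and ?A = "Amat AL AR (T (int n - 1 - int k))"
  have "agree_off_col0 N (?t * (1\<^sub>m N - AL)) (?t * (1\<^sub>m N - ?A))"
    using AL Amat_agree_off_col0[OF agree_LR]
    by (intro agree_off_col0_mult_left agree_off_col0_one_minus)
      (simp_all add: minus_carrier_mat)
  then have "agree_off_col0 N (?P * (1\<^sub>m N - AL) + ?t * (1\<^sub>m N - AL))
      ((1\<^sub>m N - ?t) + ?t * (1\<^sub>m N - ?A))"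
    using AL Suc
    by (intro agree_off_col0_add) (simp_all add: mult_carrier_mat[of _ N N] minus_carrier_mat)
  moreover have "?P * (1\<^sub>m N - AL) + ?t * (1\<^sub>m N - AL) = Psum N AL AR T n (Suc k) * (1\<^sub>m N - AL)"
    using AL
    by (simp add: add_mult_distrib_mat[OF Psum_carrier tailprod_carrier minus_carrier_mat[OF AL]])
  moreover have "(1\<^sub>m N - ?t) + ?t * (1\<^sub>m N - ?A) = 1\<^sub>m N - tailprod N AL AR T n (Suc k)"
  proof -
    have "?t * (1\<^sub>m N - ?A) = ?t - ?t * ?A"
      by (simp add: mult_minus_distrib_mat[OF tailprod_carrier one_carrier_mat Amat_carrier]
          right_mult_one_mat[OF tailprod_carrier])
    then show ?thesis
      by (intro eq_matI)
        (auto simp: carrier_matD[OF tailprod_carrier] carrier_matD[OF Amat_carrier])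
  qed
  ultimately show ?case
    by simp
qed

lemma Pmat_mult_one_minus_AL:
  "agree_off_col0 N AL AR \<Longrightarrow>
    agree_off_col0 N (Pmat N AL AR T n * (1\<^sub>m N - AL)) (1\<^sub>m N - Mmat N AL AR T n)"
  unfolding Pmat_def Mmat_eq_tailprod by (rule Psum_mult_one_minus_AL)

lemma one_minus_Mmat_agree_flip0:
  assumes "agree_off_col0 N AL AR" and "0 < n"
  shows "agree_off_col0 N (1\<^sub>m N - Mmat N AL AR S n) (1\<^sub>m N - Mmat N AL AR (flip0 n S) n)"
proof -
  obtain m where n: "n = Suc m"
    using \<open>0 < n\<close> gr0_implies_Suc by blast
  have "agree_off_col0 N (Amat AL AR s) (Amat AL AR s')" for s s'
    using Amat_agree_off_col0[OF assms(1)] agree_off_col0_sym agree_off_col0_trans by metis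
  then show ?thesis
    unfolding n Mmat_Suc_split_first tailprod_flip0
    by (intro agree_off_col0_one_minus agree_off_col0_mult_left)
      (simp_all add: mult_carrier_mat[of _ N N])
qed

lemma singular_left_factor_shift1:
  assumes "0 < n" and period: "T (int n) = T 0"
    and "singular_left_factor N (1\<^sub>m N - Mmat N AL AR T n) (Pmat N AL AR T n)"
  shows "singular_left_factor N (1\<^sub>m N - Mmat N AL AR (shift T 1) n) (Pmat N AL AR (shift T 1) n)"
proof -
  obtain X where "det (1\<^sub>m N - Mmat N AL AR T n) = 0" and X: "X \<in> carrier_mat N N"
    and sol: "(1\<^sub>m N - Mmat N AL AR T n) * X = Pmat N AL AR T n"
    using assms(3) unfolding singular_left_factor_def by blast
  obtain m where n: "n = Suc m"
    using \<open>0 < n\<close> gr0_implies_Suc by blast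
  define Q where "Q = tailprod N AL AR T n m"
  define A where "A = Amat AL AR (T 0)"
  define Ps where "Ps = Psum N AL AR T n m"
  have carriers: "Q \<in> carrier_mat N N" "A \<in> carrier_mat N N" "Ps \<in> carrier_mat N N"
    by (simp_all add: Q_def A_def Ps_def)
  have M: "Mmat N AL AR T n = Q * A" and P: "Pmat N AL AR T n = Ps + Q"
    by (simp_all add: n Q_def A_def Ps_def Mmat_Suc_split_first Pmat_def)
  have M': "Mmat N AL AR (shift T 1) n = A * Q"
    and P': "Pmat N AL AR (shift T 1) n = 1\<^sub>m N + A * Ps"
    using period by (simp_all only: n Q_def A_def Ps_def Mmat_shift1 Pmat_shift1)
  have "det (1\<^sub>m N - A * Q) = 0"
    using singular_one_minus_mult_commute carriers \<open>det (1\<^sub>m N - Mmat N AL AR T n) = 0\<close> M by metis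
  moreover have "(1\<^sub>m N - A * Q) * (A * X + 1\<^sub>m N) = 1\<^sub>m N + A * Ps"
    using solution_one_minus_mult_commute carriers X sol M P by metis
  moreover have "A * X + 1\<^sub>m N \<in> carrier_mat N N"
    using carriers X by simp
  ultimately show ?thesis
    unfolding M' P' singular_left_factor_def by blast
qed

lemma singular_left_factor_shift:
  assumes "0 < n" and period: "\<forall>j. S (j + int n) = S j"
    and "singular_left_factor N (1\<^sub>m N - Mmat N AL AR S n) (Pmat N AL AR S n)"
  shows "singular_left_factor N (1\<^sub>m N - Mmat N AL AR (shift S i) n) (Pmat N AL AR (shift S i) n)"
proof -
  have nat_shifts: "singular_left_factor N (1\<^sub>m N - Mmat N AL AR (shift S (int k)) n)
      (Pmat N AL AR (shift S (int k)) n)" for k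
  proof (induction k)
    case 0
    then show ?case
      using assms(3) by (simp add: shift_def)
  next
    case (Suc k)
    have "shift S (int k) (int n) = shift S (int k) 0"
      using period by (simp add: shift_def add.commute)
    moreover have "shift (shift S (int k)) 1 = shift S (int (Suc k))"
      by (simp add: shift_shift add.commute)
    ultimately show ?case
      using singular_left_factor_shift1[OF \<open>0 < n\<close>] Suc by metis
  qed
  have "shift S i = shift S (int (nat (i mod int n)))"
    using shift_mod_period[OF period] \<open>0 < n\<close> by simp
  then show ?thesis
    using nat_shifts by metis
qed

lemma one_minus_Mmat_left_factor_Pmat:
  assumes "agree_off_col0 N AL AR" and "0 < N" and "0 < n"
    and "det (1\<^sub>m N - Mmat N AL AR (flip0 n S) n) \<noteq> 0" and "det (Pmat N AL AR S n) = 0"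
  obtains X where "X \<in> carrier_mat N N" "(1\<^sub>m N - Mmat N AL AR S n) * X = Pmat N AL AR S n"
  by (rule solvable_if_agree_off_col0_invertible[OF minus_carrier_mat[OF Mmat_carrier]
        minus_carrier_mat[OF Mmat_carrier] Pmat_carrier minus_carrier_mat[OF AL] \<open>0 < N\<close>
        one_minus_Mmat_agree_flip0[OF assms(1,3)] assms(4,5) Pmat_mult_one_minus_AL[OF assms(1)]])

end

theorem lemma4p10:
  fixes N n :: nat and AL AR :: "real mat" and C B :: "real vec" and mu :: real
    and S :: "int \<Rightarrow> side"
  assumes "N \<ge> 2"
    and "AL \<in> carrier_mat N N" and "C \<in> carrier_vec N" and "B \<in> carrier_vec N"
    and "AR = AL + mat N N (\<lambda>(i, j). if j = 0 then C $ i else 0)"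
    and "n \<ge> 1" and "\<forall>j. S (j + int n) = S j"
    and "det (1\<^sub>m N - Mmat N AL AR (flip0 n S) n) \<noteq> 0"
    and "det (1\<^sub>m N - Mmat N AL AR S n) = 0"
    and "det (Pmat N AL AR S n) = 0"
    and "mu \<noteq> 0"
    and "(transpose_mat (adj_mat (1\<^sub>m N - AL)) *\<^sub>v unit_vec N 0) \<bullet> B \<noteq> 0"
  shows "\<forall>i::int. det (Pmat N AL AR (shift S i) n) = 0"
proof
  fix i :: int
  note AL = assms(2)
  have AR: "AR \<in> carrier_mat N N" and agree_LR: "agree_off_col0 N AL AR"
    using AL by (auto simp: assms(5) agree_off_col0_def)
  have "0 < N" "0 < n"
    using assms(1,6) by auto
  then obtain X where "X \<in> carrier_mat N N" "(1\<^sub>m N - Mmat N AL AR S n) * X = Pmat N AL AR S n"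
    using one_minus_Mmat_left_factor_Pmat[OF AL AR agree_LR] assms(8,10) by blast
  then have "singular_left_factor N (1\<^sub>m N - Mmat N AL AR S n) (Pmat N AL AR S n)"
    using assms(9) unfolding singular_left_factor_def by blast
  then have "singular_left_factor N (1\<^sub>m N - Mmat N AL AR (shift S i) n) (Pmat N AL AR (shift S i) n)"
    using singular_left_factor_shift[OF AL AR \<open>0 < n\<close> assms(7)] by blast
  then show "det (Pmat N AL AR (shift S i) n) = 0"
    using singular_left_factor_det_zero minus_carrier_mat[OF Mmat_carrier[OF AL AR]] by blast
qed

end
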